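(* Every centrality has ties on every graph that is not rigid. Moreover, there exists a centrality $f$ such that for every rigid graph $G$, $f$ has no ties on $G$.
   Context: A graph $G=(V_G,E_G)$ is a finite directed graph with node set $V_G=\{0,1,\dots,n-1\}$ and arc set $E_G\subseteq V_G\times V_G$; write $x\to y$ for $(x,y)\in E_G$. An isomorphism $\varphi:G\to H$ is a bijection $V_G\to V_H$ such that $x\to_G y$ iff $\varphi(x)\to_H\varphi(y)$; an automorphism is an isomorphism $G\to G$. A graph is rigid if its only automorphism is the identity. A centrality $f$ is a function associating with each graph $G$ a map $f_G:V_G\to\mathbb{R}$ such that whenever $\varphi:G\to H$ is an isomorphism, $f_G(x)=f_H(\varphi(x))$ for all $x\in V_G$ (values may be negative). A centrality $f$ has no ties on $G$ if $f_G(x)\neq f_G(y)$ for all distinct $x,y\in V_G$; otherwise it has ties on $G$. *)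

theory Defs
  imports Complex_Main
begin

text \<open>A graph with node set {0,...,n-1} and arc set E is the pair (n, E).\<close>
type_synonym graph = "nat \<times> (nat \<times> nat) set"

definition nodes :: "graph \<Rightarrow> nat set" where
  "nodes G = {0..<fst G}"

definition arcs :: "graph \<Rightarrow> (nat \<times> nat) set" where
  "arcs G = snd G"

definition wf_graph :: "graph \<Rightarrow> bool" where
  "wf_graph G \<longleftrightarrow> arcs G \<subseteq> nodes G \<times> nodes G"

definition graph_iso :: "(nat \<Rightarrow> nat) \<Rightarrow> graph \<Rightarrow> graph \<Rightarrow> bool" where
  "graph_iso \<phi> G H \<longleftrightarrow> bij_betw \<phi> (nodes G) (nodes H) \<and>
     (\<forall>x\<in>nodes G. \<forall>y\<in>nodes G. (x, y) \<in> arcs G \<longleftrightarrow> (\<phi> x, \<phi> y) \<in> arcs H)"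

definition automorphism :: "(nat \<Rightarrow> nat) \<Rightarrow> graph \<Rightarrow> bool" where
  "automorphism \<phi> G \<longleftrightarrow> graph_iso \<phi> G G"

definition rigid :: "graph \<Rightarrow> bool" where
  "rigid G \<longleftrightarrow> (\<forall>\<phi>. automorphism \<phi> G \<longrightarrow> (\<forall>x\<in>nodes G. \<phi> x = x))"

definition centrality :: "(graph \<Rightarrow> nat \<Rightarrow> real) \<Rightarrow> bool" where
  "centrality f \<longleftrightarrow> (\<forall>G H \<phi>. wf_graph G \<and> wf_graph H \<and> graph_iso \<phi> G H \<longrightarrow>
       (\<forall>x\<in>nodes G. f G x = f H (\<phi> x)))"

definition has_ties :: "(graph \<Rightarrow> nat \<Rightarrow> real) \<Rightarrow> graph \<Rightarrow> bool" where
  "has_ties f G \<longleftrightarrow> (\<exists>x\<in>nodes G. \<exists>y\<in>nodes G. x \<noteq> y \<and> f G x = f G y)"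

end

theory Submission
  imports Defs
begin

text \<open>A centrality is invariant under automorphisms, so a node moved by a nontrivial
automorphism ties with its image. Conversely, choose by Hilbert choice one representative
of each isomorphism class (the choice depends only on the class) and label a node by its
least possible position in that representative. For a rigid graph the isomorphism onto
the representative is unique, so the label is just that injective isomorphism.\<close>

lemma graph_iso_id: "graph_iso id G G"
  unfolding graph_iso_def by auto

lemma graph_iso_apply: "graph_iso \<phi> G H \<Longrightarrow> x \<in> nodes G \<Longrightarrow> \<phi> x \<in> nodes H"
  unfolding graph_iso_def by (meson bij_betw_apply)

lemma graph_iso_comp:
  assumes "graph_iso \<phi> G H" "graph_iso \<psi> H K"
  shows "graph_iso (\<psi> \<circ> \<phi>) G K"
  unfolding graph_iso_def
proof (intro conjI ballI)
  show "bij_betw (\<psi> \<circ> \<phi>) (nodes G) (nodes K)"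
    using assms unfolding graph_iso_def by (blast intro: bij_betw_trans)
  fix x y assume "x \<in> nodes G" "y \<in> nodes G"
  moreover from this have "\<phi> x \<in> nodes H" "\<phi> y \<in> nodes H"
    using graph_iso_apply[OF assms(1)] by blast+
  ultimately show "(x, y) \<in> arcs G \<longleftrightarrow> ((\<psi> \<circ> \<phi>) x, (\<psi> \<circ> \<phi>) y) \<in> arcs K"
    using assms unfolding graph_iso_def by simp
qed

lemma graph_iso_inv_into:
  assumes "graph_iso \<phi> G H"
  shows "graph_iso (inv_into (nodes G) \<phi>) H G"
proof -
  let ?\<psi> = "inv_into (nodes G) \<phi>"
  have bij: "bij_betw \<phi> (nodes G) (nodes H)"
    using assms unfolding graph_iso_def by auto
  have "(u, v) \<in> arcs H \<longleftrightarrow> (?\<psi> u, ?\<psi> v) \<in> arcs G" if "u \<in> nodes H" "v \<in> nodes H" for u v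
  proof -
    have "?\<psi> u \<in> nodes G" "?\<psi> v \<in> nodes G" "\<phi> (?\<psi> u) = u" "\<phi> (?\<psi> v) = v"
      using bij that by (auto intro: bij_betw_apply bij_betw_inv_into bij_betw_inv_into_right)
    with assms show ?thesis
      unfolding graph_iso_def by metis
  qed
  with bij show ?thesis
    unfolding graph_iso_def by (simp add: bij_betw_inv_into)
qed

lemma centrality_automorphism_eq:
  assumes "centrality f" "wf_graph G" "automorphism \<phi> G" "x \<in> nodes G"
  shows "f G (\<phi> x) = f G x"
  using assms unfolding centrality_def automorphism_def by metis

lemma has_ties_if_not_rigid:
  assumes "centrality f" "wf_graph G" "\<not> rigid G"
  shows "has_ties f G"
proof -
  obtain \<phi> x where "automorphism \<phi> G" "x \<in> nodes G" "\<phi> x \<noteq> x"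
    using assms(3) unfolding rigid_def by blast
  moreover from this have "\<phi> x \<in> nodes G"
    unfolding automorphism_def using graph_iso_apply by blast
  moreover have "f G (\<phi> x) = f G x"
    using centrality_automorphism_eq assms(1,2) calculation by blast
  ultimately show ?thesis
    unfolding has_ties_def by blast
qed

lemma rigid_graph_iso_unique:
  assumes "rigid G" "graph_iso \<phi> G K" "graph_iso \<psi> G K" "x \<in> nodes G"
  shows "\<phi> x = \<psi> x"
proof -
  have "automorphism (inv_into (nodes G) \<psi> \<circ> \<phi>) G"
    unfolding automorphism_def using graph_iso_comp[OF assms(2) graph_iso_inv_into[OF assms(3)]] .
  then have "inv_into (nodes G) \<psi> (\<phi> x) = x"
    using assms(1,4) unfolding rigid_def by auto
  moreover have "\<psi> (inv_into (nodes G) \<psi> (\<phi> x)) = \<phi> x"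
    using assms(2-4) graph_iso_apply unfolding graph_iso_def by (metis bij_betw_inv_into_right)
  ultimately show ?thesis by simp
qed

definition canon_graph :: "graph \<Rightarrow> graph" where
  "canon_graph G = (SOME H. \<exists>\<phi>. graph_iso \<phi> G H)"

definition canon_label :: "graph \<Rightarrow> nat \<Rightarrow> real" where
  "canon_label G x = real (Min {\<phi> x | \<phi>. graph_iso \<phi> G (canon_graph G)})"

lemma graph_iso_canon_graph: "\<exists>\<phi>. graph_iso \<phi> G (canon_graph G)"
  unfolding canon_graph_def by (rule someI_ex) (use graph_iso_id in blast)

lemma canon_graph_eq:
  assumes "graph_iso \<theta> G H"
  shows "canon_graph G = canon_graph H"
proof -
  have "(\<exists>\<phi>. graph_iso \<phi> G K) \<longleftrightarrow> (\<exists>\<phi>. graph_iso \<phi> H K)" for K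
    using graph_iso_comp[OF assms] graph_iso_comp[OF graph_iso_inv_into[OF assms]] by blast
  then show ?thesis
    unfolding canon_graph_def by simp
qed

lemma graph_iso_images_eq:
  assumes "graph_iso \<theta> G H" "x \<in> nodes G"
  shows "{\<phi> x | \<phi>. graph_iso \<phi> G K} = {\<psi> (\<theta> x) | \<psi>. graph_iso \<psi> H K}"
proof (intro set_eqI iffI)
  fix z assume "z \<in> {\<phi> x | \<phi>. graph_iso \<phi> G K}"
  then obtain \<phi> where "graph_iso \<phi> G K" "z = \<phi> x" by blast
  moreover have "inv_into (nodes G) \<theta> (\<theta> x) = x"
    using assms unfolding graph_iso_def by (meson bij_betw_inv_into_left)
  ultimately have "graph_iso (\<phi> \<circ> inv_into (nodes G) \<theta>) H K"
    and "z = (\<phi> \<circ> inv_into (nodes G) \<theta>) (\<theta> x)"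
    using graph_iso_comp[OF graph_iso_inv_into[OF assms(1)]] by auto
  then show "z \<in> {\<psi> (\<theta> x) | \<psi>. graph_iso \<psi> H K}" by blast
next
  fix z assume "z \<in> {\<psi> (\<theta> x) | \<psi>. graph_iso \<psi> H K}"
  then obtain \<psi> where "graph_iso \<psi> H K" "z = \<psi> (\<theta> x)" by blast
  then have "graph_iso (\<psi> \<circ> \<theta>) G K" "z = (\<psi> \<circ> \<theta>) x"
    using graph_iso_comp[OF assms(1)] by auto
  then show "z \<in> {\<phi> x | \<phi>. graph_iso \<phi> G K}" by blast
qed

lemma centrality_canon_label: "centrality canon_label"
  unfolding centrality_def
proof (intro allI impI ballI)
  fix G H \<theta> x
  assume "wf_graph G \<and> wf_graph H \<and> graph_iso \<theta> G H" and "x \<in> nodes G"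
  then have "canon_graph G = canon_graph H"
    and "{\<phi> x | \<phi>. graph_iso \<phi> G (canon_graph H)} = {\<psi> (\<theta> x) | \<psi>. graph_iso \<psi> H (canon_graph H)}"
    using canon_graph_eq graph_iso_images_eq by blast+
  then show "canon_label G x = canon_label H (\<theta> x)"
    unfolding canon_label_def by simp
qed

lemma canon_label_no_ties_if_rigid:
  assumes "rigid G"
  shows "\<not> has_ties canon_label G"
proof -
  obtain \<psi> where \<psi>: "graph_iso \<psi> G (canon_graph G)"
    using graph_iso_canon_graph by blast
  then have "{\<phi> x | \<phi>. graph_iso \<phi> G (canon_graph G)} = {\<psi> x}" if "x \<in> nodes G" for x
    using rigid_graph_iso_unique[OF assms _ \<psi> that] by blast
  then have "canon_label G x = real (\<psi> x)" if "x \<in> nodes G" for x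
    using that unfolding canon_label_def by simp
  moreover have "inj_on \<psi> (nodes G)"
    using \<psi> unfolding graph_iso_def bij_betw_def by simp
  ultimately show ?thesis
    unfolding has_ties_def by (auto dest: inj_onD)
qed

theorem theorem1:
  shows "(\<forall>f G. centrality f \<and> wf_graph G \<and> \<not> rigid G \<longrightarrow> has_ties f G) \<and>
         (\<exists>f. centrality f \<and> (\<forall>G. wf_graph G \<and> rigid G \<longrightarrow> \<not> has_ties f G))"
  using has_ties_if_not_rigid centrality_canon_label canon_label_no_ties_if_rigid by blast

end
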